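(* Let $\mathcal{W}=\{W_1,\dots,W_N\}$ be a finite set of $d\times k$ real matrices and let $\mathcal{V}$ be a linear subspace of $\mathbb{S}^d$. Suppose $X_1^\star,\dots,X_N^\star\in\mathbb{S}^k_+$ are such that $X^\star:=\sum_{i=1}^N W_iX_i^\star W_i^T\in\mathcal{V}$ and $\sum_{i=1}^N\operatorname{rank}X_i^\star\ge\sum_{i=1}^N\operatorname{rank}X_i$ for all $X_1,\dots,X_N\in\mathbb{S}^k_+$ with $\sum_{i=1}^N W_iX_iW_i^T\in\mathcal{V}$. Then $\operatorname{rank}X^\star\ge\operatorname{rank}X$ for every $X\in\mathcal{V}\cap\mathcal{C}(\mathcal{W})^*$, where $\mathcal{C}(\mathcal{W})^*=\{\sum_{i=1}^N W_iX_iW_i^T: X_i\in\mathbb{S}^k_+\}$.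
   Context: $\mathbb{S}^d$ is the space of real symmetric $d\times d$ matrices, $\mathbb{S}^k_+$ the cone of $k\times k$ positive semidefinite matrices. *)

theory Defs
  imports "HOL-Analysis.Analysis"
begin

definition sym_mat :: "real^'n^'n \<Rightarrow> bool" where
  "sym_mat A \<longleftrightarrow> transpose A = A"

definition psd_mat :: "real^'n^'n \<Rightarrow> bool" where
  "psd_mat A \<longleftrightarrow> sym_mat A \<and> (\<forall>x. 0 \<le> x \<bullet> (A *v x))"

definition dual_cone :: "nat \<Rightarrow> (nat \<Rightarrow> real^'k^'d) \<Rightarrow> (real^'d^'d) set" where
  "dual_cone N W = {(\<Sum>i\<in>{1..N}. W i ** X i ** transpose (W i)) | X.
       \<forall>i\<in>{1..N}. psd_mat (X i :: real^'k^'k)}"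

end

theory Submission
  imports Defs
begin

text \<open>
  Write \<open>X = \<Sum>\<^sub>i W\<^sub>i X\<^sub>i W\<^sub>i\<^sup>T\<close> with \<open>X\<^sub>i\<close> PSD. The matrices \<open>X\<^sub>i + X\<^sub>i\<^sup>\<star>\<close> are again feasible,
  and for PSD matrices \<open>ker (X\<^sub>i + X\<^sub>i\<^sup>\<star>) = ker X\<^sub>i \<inter> ker X\<^sub>i\<^sup>\<star>\<close>, so no rank decreases; by
  maximality of \<open>\<Sum>\<^sub>i rank X\<^sub>i\<^sup>\<star>\<close> none increases either, whence \<open>ker X\<^sub>i\<^sup>\<star> \<subseteq> ker X\<^sub>i\<close>.
  Since the kernel of \<open>\<Sum>\<^sub>i W\<^sub>i A\<^sub>i W\<^sub>i\<^sup>T\<close> with all \<open>A\<^sub>i\<close> PSD is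
  \<open>{v. \<forall>i. W\<^sub>i\<^sup>T v \<in> ker A\<^sub>i}\<close>, it follows that \<open>ker X\<^sup>\<star> \<subseteq> ker X\<close>, i.e. \<open>rank X \<le> rank X\<^sup>\<star>\<close>.
\<close>

definition matrix_kernel :: "real^'n^'m \<Rightarrow> (real^'n) set" where
  "matrix_kernel A = {x. A *v x = 0}"

lemma matrix_kernel_eq_orthogonal_row_space:
  "matrix_kernel A = {y. \<forall>x\<in>range (\<lambda>z. transpose A *v z). orthogonal x y}"
proof -
  have "A *v y = 0 \<longleftrightarrow> (\<forall>z. (transpose A *v z) \<bullet> y = 0)" for y
  proof -
    have "(transpose A *v z) \<bullet> y = z \<bullet> (A *v y)" for z
      by (metis dot_lmul_matrix transpose_transpose vector_transpose_matrix)
    then show ?thesis by (metis inner_zero_right inner_eq_zero_iff)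
  qed
  then show ?thesis by (auto simp: matrix_kernel_def orthogonal_def)
qed

lemma subspace_matrix_kernel: "subspace (matrix_kernel A)"
  unfolding matrix_kernel_eq_orthogonal_row_space by (rule subspace_orthogonal_to_vectors)

lemma dim_matrix_kernel_add_rank:
  fixes A :: "real^'n^'m"
  shows "dim (matrix_kernel A) + rank A = dim (UNIV :: (real^'n) set)"
proof -
  let ?R = "range (\<lambda>z. transpose A *v z)"
  have "subspace ?R"
    by (rule linear_subspace_image[OF matrix_vector_mul_linear subspace_UNIV])
  then have "dim {y \<in> UNIV. \<forall>x \<in> ?R. orthogonal x y} + dim ?R = dim (UNIV :: (real^'n) set)"
    by (rule dim_subspace_orthogonal_to_vectors[OF _ subspace_UNIV]) simp
  moreover have "dim ?R = rank A"
    by (metis rank_dim_range rank_transpose)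
  ultimately show ?thesis by (simp add: matrix_kernel_eq_orthogonal_row_space)
qed

lemma rank_le_if_matrix_kernel_subset:
  fixes A B :: "real^'n^'m"
  assumes "matrix_kernel A \<subseteq> matrix_kernel B"
  shows "rank B \<le> rank A"
  using dim_matrix_kernel_add_rank[of A] dim_matrix_kernel_add_rank[of B] dim_subset[OF assms]
  by linarith

lemma matrix_kernel_eq_if_subset_rank_eq:
  fixes A B :: "real^'n^'m"
  assumes sub: "matrix_kernel A \<subseteq> matrix_kernel B" and "rank A = rank B"
  shows "matrix_kernel A = matrix_kernel B"
proof -
  have "dim (matrix_kernel B) \<le> dim (matrix_kernel A)"
    using dim_matrix_kernel_add_rank[of A] dim_matrix_kernel_add_rank[of B] \<open>rank A = rank B\<close>
    by linarith
  then show ?thesis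
    using subspace_dim_equal[OF subspace_matrix_kernel subspace_matrix_kernel sub] by blast
qed

lemma linear_coeff_eq_0_if_quadratic_nonneg:
  fixes b c :: real
  assumes "\<And>t. 0 \<le> c * t\<^sup>2 + b * t"
  shows "b = 0"
proof -
  define d where "d = \<bar>c\<bar> + 1"
  have d: "d > 0" "c - d < 0" by (auto simp: d_def)
  define t where "t = - b / d"
  have "c * t\<^sup>2 + b * t = b\<^sup>2 * (c - d) / d\<^sup>2"
    using d by (simp add: t_def power2_eq_square field_simps)
  then have "0 \<le> b\<^sup>2 * (c - d)"
    using assms[of t] d by (simp add: zero_le_divide_iff)
  with d show "b = 0"
    by (simp add: zero_le_mult_iff)
qed

lemma psd_mat_quadratic_form_eq_0_iff:
  fixes A :: "real^'n^'n"
  assumes "psd_mat A"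
  shows "x \<bullet> (A *v x) = 0 \<longleftrightarrow> A *v x = 0"
proof
  assume x: "x \<bullet> (A *v x) = 0"
  let ?y = "A *v x"
  have "transpose A = A" using assms by (simp add: psd_mat_def sym_mat_def)
  then have sym: "x \<bullet> (A *v ?y) = ?y \<bullet> ?y"
    by (metis dot_lmul_matrix inner_commute vector_transpose_matrix)
  have "0 \<le> (?y \<bullet> (A *v ?y)) * t\<^sup>2 + (2 * (?y \<bullet> ?y)) * t" for t
  proof -
    have "0 \<le> (x + t *\<^sub>R ?y) \<bullet> (A *v (x + t *\<^sub>R ?y))"
      using assms by (simp add: psd_mat_def)
    also have "\<dots> = (?y \<bullet> (A *v ?y)) * t\<^sup>2 + (2 * (?y \<bullet> ?y)) * t"
      using x sym by (simp add: matrix_vector_right_distrib matrix_vector_mult_scaleR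
          inner_add_left inner_add_right inner_commute[of _ x] power2_eq_square algebra_simps)
    finally show ?thesis .
  qed
  then have "2 * (?y \<bullet> ?y) = 0" by (rule linear_coeff_eq_0_if_quadratic_nonneg)
  then show "A *v x = 0" by simp
qed simp

lemma psd_mat_0: "psd_mat (0 :: real^'n^'n)"
  by (simp add: psd_mat_def sym_mat_def transpose_def vec_eq_iff)

lemma psd_mat_add:
  fixes A B :: "real^'n^'n"
  assumes "psd_mat A" "psd_mat B"
  shows "psd_mat (A + B)"
proof -
  have "transpose (A + B) = transpose A + transpose B"
    by (simp add: transpose_def vec_eq_iff)
  with assms show ?thesis
    by (simp add: psd_mat_def sym_mat_def matrix_vector_mult_add_rdistrib inner_add_right
        add_nonneg_nonneg)
qed

lemma psd_mat_sum:
  fixes A :: "'i \<Rightarrow> real^'n^'n"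
  shows "\<forall>i\<in>S. psd_mat (A i) \<Longrightarrow> psd_mat (\<Sum>i\<in>S. A i)"
  by (induction S rule: infinite_finite_induct) (auto intro: psd_mat_0 psd_mat_add)

lemma inner_congruence_mult:
  fixes W :: "real^'k^'d"
  shows "x \<bullet> ((W ** A ** transpose W) *v x) = (transpose W *v x) \<bullet> (A *v (transpose W *v x))"
  by (metis dot_lmul_matrix matrix_vector_mul_assoc transpose_transpose vector_transpose_matrix)

lemma psd_mat_congruence:
  fixes A :: "real^'k^'k" and W :: "real^'k^'d"
  assumes "psd_mat A"
  shows "psd_mat (W ** A ** transpose W)"
  using assms
  by (simp add: psd_mat_def sym_mat_def inner_congruence_mult matrix_transpose_mul matrix_mul_assoc)

lemma matrix_kernel_psd_add:
  fixes A B :: "real^'n^'n"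
  assumes A: "psd_mat A" and B: "psd_mat B"
  shows "matrix_kernel (A + B) = matrix_kernel A \<inter> matrix_kernel B"
proof (intro equalityI subsetI)
  fix x assume "x \<in> matrix_kernel (A + B)"
  then have "x \<bullet> (A *v x) + x \<bullet> (B *v x) = 0"
    by (simp add: matrix_kernel_def matrix_vector_mult_add_rdistrib flip: inner_add_right)
  moreover have "x \<bullet> (A *v x) \<ge> 0" "x \<bullet> (B *v x) \<ge> 0"
    using A B by (auto simp: psd_mat_def)
  ultimately have "x \<bullet> (A *v x) = 0" "x \<bullet> (B *v x) = 0" by linarith+
  then show "x \<in> matrix_kernel A \<inter> matrix_kernel B"
    by (simp add: matrix_kernel_def psd_mat_quadratic_form_eq_0_iff[OF A]
        psd_mat_quadratic_form_eq_0_iff[OF B])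
qed (simp add: matrix_kernel_def matrix_vector_mult_add_rdistrib)

lemma matrix_kernel_psd_sum:
  fixes A :: "'i \<Rightarrow> real^'n^'n"
  assumes "finite S" and "\<forall>i\<in>S. psd_mat (A i)"
  shows "matrix_kernel (\<Sum>i\<in>S. A i) = (\<Inter>i\<in>S. matrix_kernel (A i))"
  using assms
proof (induction S rule: finite_induct)
  case empty
  then show ?case by (simp add: matrix_kernel_def)
next
  case (insert j S)
  then show ?case by (simp add: matrix_kernel_psd_add psd_mat_sum)
qed

lemma matrix_kernel_congruence:
  fixes A :: "real^'k^'k" and W :: "real^'k^'d"
  assumes "psd_mat A"
  shows "matrix_kernel (W ** A ** transpose W) = {v. transpose W *v v \<in> matrix_kernel A}"
proof (intro equalityI subsetI)
  fix v assume "v \<in> matrix_kernel (W ** A ** transpose W)"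
  then have "v \<bullet> ((W ** A ** transpose W) *v v) = 0"
    by (simp add: matrix_kernel_def)
  then have "(transpose W *v v) \<bullet> (A *v (transpose W *v v)) = 0"
    by (simp only: inner_congruence_mult)
  then show "v \<in> {v. transpose W *v v \<in> matrix_kernel A}"
    by (simp add: matrix_kernel_def psd_mat_quadratic_form_eq_0_iff[OF assms])
qed (simp add: matrix_kernel_def flip: matrix_vector_mul_assoc)

lemma matrix_kernel_sum_congruence:
  fixes A :: "'i \<Rightarrow> real^'k^'k" and W :: "'i \<Rightarrow> real^'k^'d"
  assumes "finite S" and "\<forall>i\<in>S. psd_mat (A i)"
  shows "matrix_kernel (\<Sum>i\<in>S. W i ** A i ** transpose (W i))
           = (\<Inter>i\<in>S. {v. transpose (W i) *v v \<in> matrix_kernel (A i)})"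
  using assms
  by (simp add: matrix_kernel_psd_sum psd_mat_congruence matrix_kernel_congruence)

lemma matrix_add_rdistrib: "(A + B) ** C = A ** C + B ** (C :: 'a::semiring_1^'p^'n)"
  by (vector matrix_matrix_mult_def sum.distrib[symmetric] field_simps)

lemma matrix_kernel_subset_if_rank_sum_maximal:
  fixes A B :: "'i \<Rightarrow> real^'n^'n"
  assumes "finite S" and A: "\<forall>i\<in>S. psd_mat (A i)" and B: "\<forall>i\<in>S. psd_mat (B i)"
    and max: "(\<Sum>i\<in>S. rank (A i + B i)) \<le> (\<Sum>i\<in>S. rank (B i))" and "j \<in> S"
  shows "matrix_kernel (B j) \<subseteq> matrix_kernel (A j)"
proof -
  have ker_add: "matrix_kernel (A i + B i) = matrix_kernel (A i) \<inter> matrix_kernel (B i)"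
    if "i \<in> S" for i
    using that A B by (simp add: matrix_kernel_psd_add)
  have rank_le: "rank (B i) \<le> rank (A i + B i)" if "i \<in> S" for i
    using ker_add[OF that] by (intro rank_le_if_matrix_kernel_subset) blast
  then have "(\<Sum>i\<in>S. rank (B i)) \<le> (\<Sum>i\<in>S. rank (A i + B i))"
    by (rule sum_mono)
  with max have "rank (B j) = rank (A j + B j)"
    by (intro sum_mono_inv[OF _ rank_le \<open>j \<in> S\<close> \<open>finite S\<close>]) simp
  then have "matrix_kernel (A j + B j) = matrix_kernel (B j)"
    using ker_add[OF \<open>j \<in> S\<close>] by (intro matrix_kernel_eq_if_subset_rank_eq) auto
  then show ?thesis using ker_add[OF \<open>j \<in> S\<close>] by blast
qed

theorem lemma6:
  fixes N :: nat
    and W :: "nat \<Rightarrow> real^'k^'d"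
    and V :: "(real^'d^'d) set"
    and Xs :: "nat \<Rightarrow> real^'k^'k"
  assumes V_sub: "subspace V"
    and V_sym: "\<forall>A\<in>V. sym_mat A"
    and Xs_psd: "\<forall>i\<in>{1..N}. psd_mat (Xs i)"
    and Xs_in: "(\<Sum>i\<in>{1..N}. W i ** Xs i ** transpose (W i)) \<in> V"
    and Xs_max: "\<And>X :: nat \<Rightarrow> real^'k^'k.
        (\<forall>i\<in>{1..N}. psd_mat (X i)) \<Longrightarrow>
        (\<Sum>i\<in>{1..N}. W i ** X i ** transpose (W i)) \<in> V \<Longrightarrow>
        (\<Sum>i\<in>{1..N}. rank (X i)) \<le> (\<Sum>i\<in>{1..N}. rank (Xs i))"
  shows "\<forall>X\<in>V \<inter> dual_cone N W.
           rank X \<le> rank (\<Sum>i\<in>{1..N}. W i ** Xs i ** transpose (W i))"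
proof
  fix X assume X: "X \<in> V \<inter> dual_cone N W"
  then obtain Xi where Xi_psd: "\<forall>i\<in>{1..N}. psd_mat (Xi i :: real^'k^'k)"
    and X_eq: "X = (\<Sum>i\<in>{1..N}. W i ** Xi i ** transpose (W i))"
    by (auto simp: dual_cone_def)
  have "(\<Sum>i\<in>{1..N}. W i ** (Xi i + Xs i) ** transpose (W i))
          = X + (\<Sum>i\<in>{1..N}. W i ** Xs i ** transpose (W i))"
    by (simp add: X_eq matrix_add_ldistrib matrix_add_rdistrib sum.distrib)
  also have "\<dots> \<in> V" using X Xs_in V_sub by (simp add: subspace_add)
  finally have "(\<Sum>i\<in>{1..N}. rank (Xi i + Xs i)) \<le> (\<Sum>i\<in>{1..N}. rank (Xs i))"
    using Xs_max[of "\<lambda>i. Xi i + Xs i"] Xi_psd Xs_psd by (simp add: psd_mat_add)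
  then have ker_sub: "matrix_kernel (Xs i) \<subseteq> matrix_kernel (Xi i)" if "i \<in> {1..N}" for i
    using matrix_kernel_subset_if_rank_sum_maximal[OF _ Xi_psd Xs_psd _ that] by simp
  have "matrix_kernel (\<Sum>i\<in>{1..N}. W i ** Xs i ** transpose (W i)) \<subseteq> matrix_kernel X"
    unfolding X_eq matrix_kernel_sum_congruence[OF finite_atLeastAtMost Xs_psd]
      matrix_kernel_sum_congruence[OF finite_atLeastAtMost Xi_psd]
    using ker_sub by blast
  then show "rank X \<le> rank (\<Sum>i\<in>{1..N}. W i ** Xs i ** transpose (W i))"
    by (rule rank_le_if_matrix_kernel_subset)
qed

end
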